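(* Let $G$ be an abelian group, $w\in G$, and $\alpha:G\to G$ a group automorphism with $\alpha^2=\mathrm{id}$. Define $\beta:G\to G$ by $\beta(u)=\alpha(u)+w$. Let $q_0$ be the cardinality of the subgroup of $G$ generated by $(\alpha+\mathrm{id})(w)$. If $q_0$ is infinite, then every orbit $\{\beta^k(u):k\in\mathbb{Z}\}$ of $\beta$ is infinite. If $q_0$ is finite, then the only possible cardinalities of orbits of $\beta$ are $q_0$ (possible only if $q_0$ is odd) and $2q_0$; orbits of odd cardinality exist if and only if $$( * )\qquad q_0 \text{ is odd and } q_0w\in(\alpha-\mathrm{id})(G)$$ (this holds e.g. if $q_0$ is odd and $(\alpha-\mathrm{id})(G)=\ker(\alpha+\mathrm{id})$). Moreover the numbers of orbits of odd, resp. even, cardinality are $$\nu_{\mathrm{odd}}(\beta)=\begin{cases}\#\ker(\alpha-\mathrm{id})/q_0 & \text{if } ( * ) \text{ holds},\\ 0&\text{otherwise},\end{cases}\qquad \nu_{\mathrm{even}}(\beta)=\begin{cases}\#\bigl(G\setminus\ker(\alpha-\mathrm{id})\bigr)/2q_0 & \text{if } ( * ) \text{ holds},\\ \#G/2q_0&\text{otherwise}.\end{cases}$$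
   Context: $\#$ denotes cardinality; the quotient of an infinite cardinality by a positive integer is understood to be infinite. *)

theory Defs
  imports Complex_Main
begin

definition group_aut :: "('a::ab_group_add \<Rightarrow> 'a) \<Rightarrow> bool" where
  "group_aut f \<longleftrightarrow> bij f \<and> (\<forall>x y. f (x + y) = f x + f y)"

definition subgroup_gen :: "'a::ab_group_add set \<Rightarrow> 'a set" where
  "subgroup_gen S = \<Inter>{H. 0 \<in> H \<and> (\<forall>x\<in>H. \<forall>y\<in>H. x - y \<in> H) \<and> S \<subseteq> H}"

primrec nat_mult :: "nat \<Rightarrow> 'a::ab_group_add \<Rightarrow> 'a" where
  "nat_mult 0 w = 0"
| "nat_mult (Suc n) w = w + nat_mult n w"

definition int_iter :: "('a \<Rightarrow> 'a) \<Rightarrow> int \<Rightarrow> 'a \<Rightarrow> 'a" where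
  "int_iter f k = (if 0 \<le> k then f ^^ nat k else inv f ^^ nat (- k))"

definition orbit_of :: "('a \<Rightarrow> 'a) \<Rightarrow> 'a \<Rightarrow> 'a set" where
  "orbit_of f u = range (\<lambda>k::int. int_iter f k u)"

definition orbits :: "('a \<Rightarrow> 'a) \<Rightarrow> 'a set set" where
  "orbits f = range (orbit_of f)"

end

theory Submission
  imports Defs
begin

text \<open>
  The square of \<open>\<beta>\<close> is the translation by \<open>c = \<alpha> w + w\<close>, and \<open>\<alpha>\<close> fixes \<open>c\<close>, hence the whole
  group \<open>H = \<langle>c\<rangle>\<close>; so \<open>\<beta>\<close> commutes with translations by \<open>H\<close> and the orbit of \<open>u\<close> is
  \<open>(u + H) \<union> (\<beta> u + H)\<close>. It has \<open>#H\<close> points if \<open>\<beta> u - u \<in> H\<close> and \<open>2 #H\<close> points otherwise.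
  In the first case \<open>h = \<beta> u - u\<close> is fixed by \<open>\<alpha>\<close> and \<open>c = 2h\<close>, so \<open>2h\<close> generates a group
  containing \<open>h\<close>, which forces \<open>#H\<close> to be odd. The points on odd orbits form
  \<open>S = {u. \<beta> u - u \<in> H}\<close>, which is nonempty exactly under condition (*) (take \<open>u = -(x + m w)\<close>
  when \<open>#H = 2m + 1\<close> and \<open>#H w = \<alpha> x - x\<close>). Two points of \<open>S\<close> differ by \<open>d\<close> with
  \<open>\<alpha> d - d \<in> H\<close>; as \<open>\<alpha>\<close> is the identity on \<open>H\<close> but negates \<open>\<alpha> d - d\<close>, and \<open>H\<close> has odd
  order, \<open>\<alpha> d = d\<close>. So \<open>S\<close> is a coset of \<open>ker (\<alpha> - id)\<close>, and counting \<open>S\<close> and its complement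
  orbit by orbit gives the two orbit numbers.
\<close>

section \<open>Multiples and subgroups of an abelian group\<close>

lemma nat_mult_add: "nat_mult (m + n) x = nat_mult m x + nat_mult n x"
  by (induct m) (simp_all add: add.assoc)

lemma nat_mult_add_right: "nat_mult n (x + y) = nat_mult n x + nat_mult n y"
  by (induct n) (simp_all add: algebra_simps)

lemma nat_mult_zero_right [simp]: "nat_mult n 0 = 0"
  by (induct n) simp_all

lemma nat_mult_mult: "nat_mult (m * n) x = nat_mult m (nat_mult n x)"
  by (induct m) (simp_all add: nat_mult_add nat_mult_add_right)

lemma nat_mult_minus_right: "nat_mult n (- x) = - nat_mult n x"
  by (induct n) (simp_all add: algebra_simps)

lemma nat_mult_diff_right: "nat_mult n (x - y) = nat_mult n x - nat_mult n y"
  by (metis diff_conv_add_uminus nat_mult_add_right nat_mult_minus_right)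

lemma nat_mult_2: "nat_mult 2 x = x + x"
  by (simp add: numeral_2_eq_2)

lemma sum_constant_eq_nat_mult: "(\<Sum>_\<in>A. x) = nat_mult (card A) x"
proof (cases "finite A")
  case True
  then show ?thesis by (induct A rule: finite_induct) simp_all
qed simp

lemma nat_mult_mod:
  assumes "nat_mult n x = 0"
  shows "nat_mult j x = nat_mult (j mod n) x"
proof -
  have "nat_mult j x = nat_mult (j div n * n) x + nat_mult (j mod n) x"
    by (metis div_mult_mod_eq nat_mult_add)
  also have "nat_mult (j div n * n) x = 0"
    by (simp add: nat_mult_mult assms)
  finally show ?thesis by simp
qed

definition add_subgroup :: "'a::ab_group_add set \<Rightarrow> bool" where
  "add_subgroup H \<longleftrightarrow> 0 \<in> H \<and> (\<forall>x\<in>H. \<forall>y\<in>H. x - y \<in> H)"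

lemma add_subgroup_zero: "add_subgroup H \<Longrightarrow> 0 \<in> H"
  by (simp add: add_subgroup_def)

lemma add_subgroup_diff: "add_subgroup H \<Longrightarrow> x \<in> H \<Longrightarrow> y \<in> H \<Longrightarrow> x - y \<in> H"
  by (simp add: add_subgroup_def)

lemma add_subgroup_uminus: "add_subgroup H \<Longrightarrow> x \<in> H \<Longrightarrow> - x \<in> H"
  using add_subgroup_diff[of H 0 x] add_subgroup_zero[of H] by simp

lemma add_subgroup_add: "add_subgroup H \<Longrightarrow> x \<in> H \<Longrightarrow> y \<in> H \<Longrightarrow> x + y \<in> H"
  using add_subgroup_diff[of H x "- y"] add_subgroup_uminus[of H y] by simp

lemma add_subgroup_nat_mult: "add_subgroup H \<Longrightarrow> x \<in> H \<Longrightarrow> nat_mult n x \<in> H"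
  by (induct n) (simp_all add: add_subgroup_zero add_subgroup_add)

lemma add_subgroup_subgroup_gen: "add_subgroup (subgroup_gen S)"
  unfolding add_subgroup_def subgroup_gen_def by auto

lemma subgroup_gen_superset: "S \<subseteq> subgroup_gen S"
  unfolding subgroup_gen_def by auto

lemma subgroup_gen_least: "add_subgroup H \<Longrightarrow> S \<subseteq> H \<Longrightarrow> subgroup_gen S \<subseteq> H"
  unfolding add_subgroup_def subgroup_gen_def by auto

lemma subgroup_gen_singleton_translate:
  assumes closed: "\<And>x. x \<in> A \<Longrightarrow> x + c \<in> A \<and> x - c \<in> A"
    and "h \<in> subgroup_gen {c}" and "x \<in> A"
  shows "x + h \<in> A"
proof -
  let ?T = "{h. \<forall>x\<in>A. x + h \<in> A \<and> x - h \<in> A}"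
  have "add_subgroup ?T"
    unfolding add_subgroup_def
  proof (intro conjI ballI)
    fix a b assume a: "a \<in> ?T" and b: "b \<in> ?T"
    show "a - b \<in> ?T"
    proof (intro CollectI ballI)
      fix x assume "x \<in> A"
      have eqs: "x + (a - b) = (x + a) - b" "x - (a - b) = (x - a) + b"
        by (simp_all add: algebra_simps)
      show "x + (a - b) \<in> A \<and> x - (a - b) \<in> A"
        unfolding eqs using a b \<open>x \<in> A\<close> by blast
    qed
  qed simp
  moreover have "{c} \<subseteq> ?T" using closed by blast
  ultimately have "subgroup_gen {c} \<subseteq> ?T" by (rule subgroup_gen_least)
  then show ?thesis using assms(2,3) by blast
qed

text \<open>Translation by \<open>h\<close> permutes \<open>H\<close>; compare the sum over \<open>H\<close> with the sum over \<open>h + H\<close>.\<close>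
lemma nat_mult_card_add_subgroup:
  assumes "add_subgroup H" "finite H" "h \<in> H"
  shows "nat_mult (card H) h = 0"
proof -
  have "(+) h ` H = H"
  proof
    show "(+) h ` H \<subseteq> H" using assms by (auto intro: add_subgroup_add)
    show "H \<subseteq> (+) h ` H"
    proof
      fix y assume "y \<in> H"
      then have "y - h \<in> H" using assms add_subgroup_diff by blast
      then show "y \<in> (+) h ` H" by (rule rev_image_eqI) simp
    qed
  qed
  then have "sum id H = sum id ((+) h ` H)" by simp
  also have "\<dots> = sum ((+) h) H" by (simp add: sum.reindex)
  also have "\<dots> = (\<Sum>_\<in>H. h) + sum id H" by (simp add: sum.distrib)
  finally show ?thesis by (simp add: sum_constant_eq_nat_mult)
qed

lemma add_subgroup_multiples:
  assumes "0 < n" "nat_mult n c = 0"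
  shows "add_subgroup (range (\<lambda>j. nat_mult j c))"
  unfolding add_subgroup_def
proof (intro conjI ballI)
  show "0 \<in> range (\<lambda>j. nat_mult j c)" by (rule range_eqI[of _ _ 0]) simp
  fix x y assume "x \<in> range (\<lambda>j. nat_mult j c)" "y \<in> range (\<lambda>j. nat_mult j c)"
  then obtain i j where ij: "x = nat_mult i c" "y = nat_mult j c" by auto
  have "y + nat_mult ((n - 1) * j) c = nat_mult (n * j) c"
    using assms(1) ij by (simp add: nat_mult_add[symmetric] algebra_simps)
  also have "\<dots> = 0" by (simp add: mult.commute nat_mult_mult assms(2))
  finally have "x - y = nat_mult (i + (n - 1) * j) c"
    by (simp add: nat_mult_add ij(1) eq_neg_iff_add_eq_0[symmetric])
  then show "x - y \<in> range (\<lambda>j. nat_mult j c)" by simp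
qed

lemma card_subgroup_gen_singleton_le:
  assumes "0 < n" "nat_mult n c = 0"
  shows "card (subgroup_gen {c}) \<le> n"
proof -
  have "nat_mult j c \<in> (\<lambda>j. nat_mult j c) ` {..<n}" for j
    using nat_mult_mod[OF assms(2), of j] assms(1) by (intro image_eqI[of _ _ "j mod n"]) simp_all
  moreover have "subgroup_gen {c} \<subseteq> range (\<lambda>j. nat_mult j c)"
    by (rule subgroup_gen_least[OF add_subgroup_multiples[OF assms]]) (auto intro: range_eqI[of _ _ 1])
  ultimately have "card (subgroup_gen {c}) \<le> card ((\<lambda>j. nat_mult j c) ` {..<n})"
    by (intro card_mono) auto
  also have "\<dots> \<le> n" using card_image_le[of "{..<n}"] by simp
  finally show ?thesis .
qed

text \<open>Doubling maps the subgroup onto itself, hence injectively; if its order were \<open>2m\<close>,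
  then \<open>m (h + h)\<close> would double to \<open>0\<close>, so \<open>h + h\<close> would have order at most \<open>m\<close>.\<close>
lemma odd_card_subgroup_gen_double:
  fixes h :: "'a::ab_group_add"
  assumes fin: "finite (subgroup_gen {h + h})" and h: "h \<in> subgroup_gen {h + h}"
  shows "odd (card (subgroup_gen {h + h}))"
proof
  let ?H = "subgroup_gen {h + h}" and ?double = "\<lambda>x::'a. x + x"
  have sg: "add_subgroup ?H" by (rule add_subgroup_subgroup_gen)
  have hh: "h + h \<in> ?H" using subgroup_gen_superset by blast
  assume "even (card ?H)"
  then obtain m where m: "card ?H = 2 * m" by auto
  have "card ?H > 0" using fin add_subgroup_zero[OF sg] card_gt_0_iff by blast
  then have "m > 0" using m by simp
  have "add_subgroup (?double ` ?H)"
    unfolding add_subgroup_def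
  proof (intro conjI ballI)
    show "0 \<in> ?double ` ?H" using add_subgroup_zero[OF sg] by (rule rev_image_eqI) simp
    fix x y assume "x \<in> ?double ` ?H" "y \<in> ?double ` ?H"
    then obtain a b where ab: "a \<in> ?H" "b \<in> ?H" "x = a + a" "y = b + b" by auto
    then have "x - y = ?double (a - b)" by (simp add: algebra_simps)
    with ab show "x - y \<in> ?double ` ?H" using add_subgroup_diff[OF sg] by blast
  qed
  then have "?H \<subseteq> ?double ` ?H" using h by (intro subgroup_gen_least) auto
  moreover have "?double ` ?H \<subseteq> ?H" using add_subgroup_add[OF sg] by blast
  ultimately have "inj_on ?double ?H" using fin by (metis eq_card_imp_inj_on subset_antisym)
  moreover have "?double (nat_mult m (h + h)) = ?double 0"
    using nat_mult_card_add_subgroup[OF sg fin hh] m by (simp add: nat_mult_add[symmetric] mult_2)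
  ultimately have "nat_mult m (h + h) = 0"
    by (rule inj_onD) (simp_all add: add_subgroup_nat_mult[OF sg hh] add_subgroup_zero[OF sg])
  then have "card ?H \<le> m" using card_subgroup_gen_singleton_le \<open>m > 0\<close> by blast
  then show False using m \<open>m > 0\<close> by simp
qed

lemma add_subgroup_odd_card_two_torsion:
  assumes "add_subgroup H" "finite H" "odd (card H)" "h \<in> H" "h + h = 0"
  shows "h = 0"
proof -
  obtain m where m: "card H = Suc (2 * m)" using assms(3) oddE by fastforce
  have "nat_mult (2 * m) h = 0"
    by (simp add: mult.commute nat_mult_mult nat_mult_2 assms(5))
  then show ?thesis using nat_mult_card_add_subgroup[OF assms(1,2,4)] m by simp
qed

section \<open>Orbits of a bijection\<close>

lemma int_iter_succ:
  assumes "bij f"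
  shows "int_iter f (k + 1) x = f (int_iter f k x)"
proof (cases "0 \<le> k")
  case True
  then have "nat (k + 1) = Suc (nat k)" by simp
  then show ?thesis using True by (simp add: int_iter_def)
next
  case False
  then have "nat (- k) = Suc (nat (- (k + 1)))" by simp
  then have "int_iter f k x = inv f (int_iter f (k + 1) x)"
    using False by (simp add: int_iter_def)
  then show ?thesis using assms by (simp add: bij_is_surj surj_f_inv_f)
qed

lemma int_iter_pred:
  assumes "bij f"
  shows "int_iter f (k - 1) x = inv f (int_iter f k x)"
  using int_iter_succ[OF assms, of "k - 1"] assms by (simp add: bij_is_inj inv_f_f)

lemma orbit_of_self: "u \<in> orbit_of f u"
  unfolding orbit_of_def by (rule range_eqI[of _ _ 0]) (simp add: int_iter_def)

lemma orbit_of_apply: "bij f \<Longrightarrow> x \<in> orbit_of f u \<Longrightarrow> f x \<in> orbit_of f u"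
  unfolding orbit_of_def by (auto simp: int_iter_succ[symmetric])

lemma orbit_of_inv_apply: "bij f \<Longrightarrow> x \<in> orbit_of f u \<Longrightarrow> inv f x \<in> orbit_of f u"
  unfolding orbit_of_def by (auto simp: int_iter_pred[symmetric])

lemma orbit_of_least:
  assumes "bij f" "u \<in> A" "\<And>x. x \<in> A \<Longrightarrow> f x \<in> A" "\<And>x. x \<in> A \<Longrightarrow> inv f x \<in> A"
  shows "orbit_of f u \<subseteq> A"
proof -
  have "int_iter f k u \<in> A" for k
  proof (induct k rule: int_induct[where k = 0])
    case base
    then show ?case using assms(2) by (simp add: int_iter_def)
  next
    case (step1 i)
    then show ?case using assms(3) by (simp add: int_iter_succ[OF assms(1)])
  next
    case (step2 i)
    then show ?case using assms(4) by (simp add: int_iter_pred[OF assms(1)])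
  qed
  then show ?thesis unfolding orbit_of_def by auto
qed

lemma orbit_of_subset: "bij f \<Longrightarrow> x \<in> orbit_of f u \<Longrightarrow> orbit_of f x \<subseteq> orbit_of f u"
  by (rule orbit_of_least) (auto intro: orbit_of_apply orbit_of_inv_apply)

lemma orbit_of_eq:
  assumes "bij f" "x \<in> orbit_of f u"
  shows "orbit_of f x = orbit_of f u"
proof
  show "orbit_of f x \<subseteq> orbit_of f u" using assms by (rule orbit_of_subset)
  have "orbit_of f u \<subseteq> {y. u \<in> orbit_of f y}"
  proof (rule orbit_of_least[OF assms(1)])
    fix y assume "y \<in> {y. u \<in> orbit_of f y}"
    moreover have "y \<in> orbit_of f (f y)" "y \<in> orbit_of f (inv f y)"
      using orbit_of_inv_apply[OF assms(1) orbit_of_self, of "f y"]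
        orbit_of_apply[OF assms(1) orbit_of_self, of "inv f y"] assms(1)
      by (simp_all add: bij_is_inj bij_is_surj surj_f_inv_f)
    ultimately show "f y \<in> {y. u \<in> orbit_of f y}" "inv f y \<in> {y. u \<in> orbit_of f y}"
      using orbit_of_subset[OF assms(1)] by blast+
  qed (simp add: orbit_of_self)
  then have "u \<in> orbit_of f x" using assms(2) by blast
  then show "orbit_of f u \<subseteq> orbit_of f x" by (rule orbit_of_subset[OF assms(1)])
qed

lemma orbit_of_disjoint:
  "bij f \<Longrightarrow> orbit_of f x \<noteq> orbit_of f y \<Longrightarrow> orbit_of f x \<inter> orbit_of f y = {}"
  by (metis disjoint_iff orbit_of_eq)

lemma card_eq_mult_card_orbits:
  assumes "bij f" and invariant: "\<And>x. x \<in> A \<Longrightarrow> orbit_of f x \<subseteq> A"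
    and size: "\<And>x. x \<in> A \<Longrightarrow> finite (orbit_of f x) \<and> card (orbit_of f x) = k"
  shows "finite (orbit_of f ` A) \<longleftrightarrow> finite A" and "card A = k * card (orbit_of f ` A)"
proof -
  have union: "\<Union> (orbit_of f ` A) = A"
  proof
    show "\<Union> (orbit_of f ` A) \<subseteq> A" using invariant by blast
    show "A \<subseteq> \<Union> (orbit_of f ` A)" using orbit_of_self by fast
  qed
  show fin: "finite (orbit_of f ` A) \<longleftrightarrow> finite A"
  proof
    assume "finite (orbit_of f ` A)"
    then have "finite (\<Union> (orbit_of f ` A))" using size by (intro finite_Union) auto
    then show "finite A" by (simp only: union)
  qed simp
  show "card A = k * card (orbit_of f ` A)"
  proof (cases "finite A")
    case True
    have "k * card (orbit_of f ` A) = card (\<Union> (orbit_of f ` A))"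
    proof (rule card_partition)
      show "c1 \<inter> c2 = {}" if "c1 \<in> orbit_of f ` A" "c2 \<in> orbit_of f ` A" "c1 \<noteq> c2" for c1 c2
        using that orbit_of_disjoint[OF assms(1)] by fast
    qed (use True fin union size in auto)
    then show ?thesis by (simp only: union)
  qed (use fin in simp)
qed

section \<open>Orbits of an affine involution\<close>

locale affine_involution =
  fixes \<alpha> :: "'a::ab_group_add \<Rightarrow> 'a" and w :: 'a and \<beta> :: "'a \<Rightarrow> 'a"
  assumes additive: "\<alpha> (x + y) = \<alpha> x + \<alpha> y"
    and involutive: "\<alpha> (\<alpha> x) = x"
    and affine: "\<beta> x = \<alpha> x + w"
begin

abbreviation shift :: 'a where "shift \<equiv> \<alpha> w + w"
abbreviation H :: "'a set" where "H \<equiv> subgroup_gen {shift}"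
abbreviation K :: "'a set" where "K \<equiv> {x. \<alpha> x - x = 0}"
abbreviation odd_orbits :: "'a set set" where
  "odd_orbits \<equiv> {Y \<in> orbits \<beta>. finite Y \<and> odd (card Y)}"
abbreviation even_orbits :: "'a set set" where
  "even_orbits \<equiv> {Y \<in> orbits \<beta>. finite Y \<and> even (card Y)}"
abbreviation odd_orbit_condition :: bool where
  "odd_orbit_condition \<equiv> odd (card H) \<and> nat_mult (card H) w \<in> range (\<lambda>x. \<alpha> x - x)"

definition coset :: "'a \<Rightarrow> 'a set" where "coset x = (+) x ` H"

definition odd_orbit_points :: "'a set" where "odd_orbit_points = {u. \<beta> u - u \<in> H}"

lemma alpha_zero: "\<alpha> 0 = 0"
  using additive[of 0 0] by simp

lemma alpha_minus: "\<alpha> (- x) = - \<alpha> x"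
  using additive[of "- x" x] alpha_zero by (simp add: eq_neg_iff_add_eq_0)

lemma alpha_diff: "\<alpha> (x - y) = \<alpha> x - \<alpha> y"
  by (metis additive alpha_minus diff_conv_add_uminus)

lemma alpha_nat_mult: "\<alpha> (nat_mult n x) = nat_mult n (\<alpha> x)"
  by (induct n) (simp_all add: alpha_zero additive)

lemma bij_beta: "bij \<beta>"
proof (rule bijI)
  show "inj \<beta>" by (rule injI) (metis affine add_right_cancel involutive)
  show "surj \<beta>" by (rule surjI[of _ "\<lambda>x. \<alpha> (x - w)"]) (simp add: affine involutive)
qed

lemma beta_beta: "\<beta> (\<beta> x) = x + shift"
  by (simp add: affine additive involutive algebra_simps)

lemma inv_beta: "inv \<beta> x = \<beta> (x - shift)"
  by (rule inv_f_eq[OF bij_is_inj[OF bij_beta]]) (simp add: beta_beta)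

lemma beta_diff: "\<beta> x - \<beta> y = \<alpha> (x - y)"
  by (simp add: affine alpha_diff)

lemma alpha_fixes_H: "h \<in> H \<Longrightarrow> \<alpha> h = h"
proof -
  have "add_subgroup {x. \<alpha> x = x}"
    unfolding add_subgroup_def by (simp add: alpha_zero alpha_diff)
  moreover have "\<alpha> shift = shift" by (simp add: additive involutive add.commute)
  ultimately have "H \<subseteq> {x. \<alpha> x = x}" by (intro subgroup_gen_least) auto
  then show "h \<in> H \<Longrightarrow> \<alpha> h = h" by blast
qed

lemma shift_in_H: "shift \<in> H"
  using subgroup_gen_superset by blast

lemma H_diff: "x \<in> H \<Longrightarrow> y \<in> H \<Longrightarrow> x - y \<in> H"
  by (rule add_subgroup_diff[OF add_subgroup_subgroup_gen])

lemma H_add: "x \<in> H \<Longrightarrow> y \<in> H \<Longrightarrow> x + y \<in> H"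
  by (rule add_subgroup_add[OF add_subgroup_subgroup_gen])

lemma mem_coset_iff: "y \<in> coset x \<longleftrightarrow> y - x \<in> H"
  unfolding coset_def by (auto simp: image_iff) (metis add.commute diff_add_cancel)

lemma coset_eq:
  assumes "y - x \<in> H"
  shows "coset y = coset x"
proof -
  have "z - x = (z - y) + (y - x)" "z - y = (z - x) - (y - x)" for z
    by (simp_all add: algebra_simps)
  then show ?thesis
    unfolding set_eq_iff mem_coset_iff using assms H_add H_diff by metis
qed

lemma card_coset: "card (coset x) = card H"
  unfolding coset_def by (simp add: card_image)

lemma finite_coset_iff: "finite (coset x) \<longleftrightarrow> finite H"
  unfolding coset_def by (simp add: finite_image_iff)

lemma orbit_eq_cosets: "orbit_of \<beta> u = coset u \<union> coset (\<beta> u)"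
proof
  let ?O = "coset u \<union> coset (\<beta> u)"
  have beta_closed: "\<beta> x \<in> ?O" if "x \<in> ?O" for x
  proof -
    have "\<beta> x - u = \<alpha> (x - \<beta> u) + shift"
      by (simp add: affine alpha_diff additive involutive algebra_simps)
    then show ?thesis using that alpha_fixes_H shift_in_H H_add
      unfolding mem_coset_iff Un_iff beta_diff by auto
  qed
  have shift_closed: "x - shift \<in> ?O" if "x \<in> ?O" for x
  proof -
    have "x - shift - y = (x - y) - shift" for y by (simp add: algebra_simps)
    then show ?thesis using that shift_in_H H_diff unfolding mem_coset_iff Un_iff by metis
  qed
  show "orbit_of \<beta> u \<subseteq> ?O"
  proof (rule orbit_of_least[OF bij_beta])
    show "u \<in> ?O" by (simp add: mem_coset_iff add_subgroup_zero[OF add_subgroup_subgroup_gen])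
  next
    show "\<beta> x \<in> ?O" if "x \<in> ?O" for x using that by (rule beta_closed)
    show "inv \<beta> x \<in> ?O" if "x \<in> ?O" for x
      unfolding inv_beta using that by (intro beta_closed shift_closed)
  qed
  have "x + shift \<in> orbit_of \<beta> u \<and> x - shift \<in> orbit_of \<beta> u" if "x \<in> orbit_of \<beta> u" for x
  proof
    show "x + shift \<in> orbit_of \<beta> u"
      unfolding beta_beta[symmetric] using that by (intro orbit_of_apply[OF bij_beta])
    have "x - shift = inv \<beta> (inv \<beta> x)"
      unfolding inv_beta[of x] using bij_beta by (simp add: bij_is_inj)
    then show "x - shift \<in> orbit_of \<beta> u"
      using that by (simp add: orbit_of_inv_apply[OF bij_beta])
  qed
  then have translate: "y + h \<in> orbit_of \<beta> u" if "y \<in> orbit_of \<beta> u" "h \<in> H" for y h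
    using subgroup_gen_singleton_translate[of "orbit_of \<beta> u" shift h y] that by blast
  have "u \<in> orbit_of \<beta> u" "\<beta> u \<in> orbit_of \<beta> u"
    by (simp_all add: orbit_of_self orbit_of_apply[OF bij_beta])
  then show "?O \<subseteq> orbit_of \<beta> u"
    unfolding coset_def using translate by auto
qed

lemma infinite_orbit: "infinite H \<Longrightarrow> infinite (orbit_of \<beta> u)"
  unfolding orbit_eq_cosets by (simp add: finite_coset_iff)

lemma odd_card_H:
  assumes "finite H" "\<beta> u - u \<in> H"
  shows "odd (card H)"
proof -
  let ?h = "\<beta> u - u"
  have "\<alpha> ?h + ?h = shift" by (simp add: affine alpha_diff additive involutive algebra_simps)
  then have "shift = ?h + ?h" using alpha_fixes_H[OF assms(2)] by simp
  then show ?thesis using odd_card_subgroup_gen_double[of ?h] assms by simp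
qed

lemma card_orbit:
  assumes "finite H"
  shows "finite (orbit_of \<beta> u) \<and>
    card (orbit_of \<beta> u) = (if u \<in> odd_orbit_points then card H else 2 * card H)"
proof (cases "u \<in> odd_orbit_points")
  case True
  then have "orbit_of \<beta> u = coset u"
    unfolding orbit_eq_cosets odd_orbit_points_def using coset_eq by simp
  then show ?thesis using True assms by (simp add: card_coset finite_coset_iff)
next
  case False
  have "coset u \<inter> coset (\<beta> u) = {}"
  proof (rule ccontr)
    assume "coset u \<inter> coset (\<beta> u) \<noteq> {}"
    then obtain z where "z - u \<in> H" "z - \<beta> u \<in> H" by (auto simp: mem_coset_iff)
    then have "(z - u) - (z - \<beta> u) \<in> H" by (rule H_diff)
    then show False using False by (simp add: odd_orbit_points_def)
  qed
  then show ?thesis using False assms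
    by (simp add: orbit_eq_cosets card_Un_disjoint card_coset finite_coset_iff)
qed

lemma odd_card_orbit_iff:
  "finite H \<Longrightarrow> odd (card (orbit_of \<beta> u)) \<longleftrightarrow> u \<in> odd_orbit_points"
  using card_orbit[of u] odd_card_H[of u] by (auto simp: odd_orbit_points_def)

lemma odd_orbit_points_orbit_invariant:
  "finite H \<Longrightarrow> x \<in> orbit_of \<beta> u \<Longrightarrow> x \<in> odd_orbit_points \<longleftrightarrow> u \<in> odd_orbit_points"
  using odd_card_orbit_iff orbit_of_eq[OF bij_beta] by metis

lemma odd_orbits_eq: "finite H \<Longrightarrow> odd_orbits = orbit_of \<beta> ` odd_orbit_points"
  unfolding orbits_def using card_orbit[THEN conjunct1] odd_card_orbit_iff by auto

lemma even_orbits_eq: "finite H \<Longrightarrow> even_orbits = orbit_of \<beta> ` (UNIV - odd_orbit_points)"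
  unfolding orbits_def using card_orbit[THEN conjunct1] odd_card_orbit_iff by auto

lemma count_odd_orbits:
  assumes "finite H"
  shows "(finite odd_orbits \<longleftrightarrow> finite odd_orbit_points) \<and>
    card odd_orbit_points = card H * card odd_orbits"
  using card_eq_mult_card_orbits[OF bij_beta, of odd_orbit_points "card H"]
    odd_orbit_points_orbit_invariant[OF assms] card_orbit[OF assms] odd_orbits_eq[OF assms]
  by auto

lemma count_even_orbits:
  assumes "finite H"
  shows "(finite even_orbits \<longleftrightarrow> finite (UNIV - odd_orbit_points)) \<and>
    card (UNIV - odd_orbit_points) = 2 * card H * card even_orbits"
  using card_eq_mult_card_orbits[OF bij_beta, of "UNIV - odd_orbit_points" "2 * card H"]
    odd_orbit_points_orbit_invariant[OF assms] card_orbit[OF assms] even_orbits_eq[OF assms]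
  by auto

lemma card_orbit_cases:
  assumes "finite H"
  shows "finite (orbit_of \<beta> u) \<and>
    (card (orbit_of \<beta> u) = card H \<and> odd (card H) \<or> card (orbit_of \<beta> u) = 2 * card H)"
  using card_orbit[OF assms, of u] odd_card_H[OF assms, of u]
  by (auto simp: odd_orbit_points_def)

lemma card_H_pos: "finite H \<Longrightarrow> 0 < card H"
  using add_subgroup_zero[OF add_subgroup_subgroup_gen] card_gt_0_iff by blast

lemma odd_orbit_condition_if_odd_orbit_point:
  assumes "finite H" "u \<in> odd_orbit_points"
  shows odd_orbit_condition
proof
  let ?q = "card H"
  have h: "\<beta> u - u \<in> H" using assms(2) by (simp add: odd_orbit_points_def)
  show "odd ?q" using odd_card_H[OF assms(1) h] .
  have "nat_mult ?q (\<beta> u - u) = 0"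
    by (rule nat_mult_card_add_subgroup[OF add_subgroup_subgroup_gen assms(1) h])
  then have "nat_mult ?q w = \<alpha> (- nat_mult ?q u) - (- nat_mult ?q u)"
    by (simp add: affine nat_mult_add_right nat_mult_diff_right alpha_nat_mult alpha_minus
        algebra_simps add_eq_0_iff2)
  then show "nat_mult ?q w \<in> range (\<lambda>x. \<alpha> x - x)" by blast
qed

lemma odd_orbit_point_if_odd_orbit_condition:
  assumes odd_orbit_condition
  obtains u where "u \<in> odd_orbit_points"
proof -
  obtain x where x: "nat_mult (card H) w = \<alpha> x - x" using assms by blast
  obtain m where m: "card H = Suc (2 * m)" using assms oddE by fastforce
  define y where "y = nat_mult m w"
  have "nat_mult (card H) w = w + (y + y)"
    by (simp add: m y_def mult_2 nat_mult_add)
  then have wx: "\<alpha> x - x = w + (y + y)" using x by simp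
  define u where "u = - (x + y)"
  have "\<beta> u - u = - \<alpha> x - \<alpha> y + w + x + y"
    by (simp add: u_def affine alpha_minus alpha_diff algebra_simps)
  also have "\<dots> = - nat_mult m shift"
    using wx by (simp add: y_def nat_mult_add_right alpha_nat_mult algebra_simps)
  finally have "\<beta> u - u = - nat_mult m shift" .
  moreover have "- nat_mult m shift \<in> H"
    by (intro add_subgroup_uminus[OF add_subgroup_subgroup_gen]
        add_subgroup_nat_mult[OF add_subgroup_subgroup_gen] shift_in_H)
  ultimately have "\<beta> u - u \<in> H" by simp
  then show thesis using that[of u] by (simp add: odd_orbit_points_def)
qed

lemma odd_orbits_nonempty_iff:
  assumes "finite H"
  shows "odd_orbits \<noteq> {} \<longleftrightarrow> odd_orbit_condition"
proof -
  have "odd_orbits \<noteq> {} \<longleftrightarrow> odd_orbit_points \<noteq> {}" by (simp add: odd_orbits_eq[OF assms])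
  then show ?thesis
    using odd_orbit_condition_if_odd_orbit_point[OF assms] odd_orbit_point_if_odd_orbit_condition
    by blast
qed

lemma odd_orbit_condition_if_range_eq_kernel:
  assumes "finite H" "odd (card H)" "range (\<lambda>x. \<alpha> x - x) = {x. \<alpha> x + x = 0}"
  shows odd_orbit_condition
proof -
  have "\<alpha> (nat_mult (card H) w) + nat_mult (card H) w = nat_mult (card H) shift"
    by (simp add: alpha_nat_mult nat_mult_add_right)
  also have "\<dots> = 0"
    by (rule nat_mult_card_add_subgroup[OF add_subgroup_subgroup_gen assms(1) shift_in_H])
  finally show ?thesis using assms(2,3) by simp
qed

lemma odd_orbit_points_eq_translate:
  assumes "finite H" "u\<^sub>0 \<in> odd_orbit_points"
  shows "odd_orbit_points = (+) u\<^sub>0 ` K"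
proof -
  have h0: "\<beta> u\<^sub>0 - u\<^sub>0 \<in> H" using assms(2) by (simp add: odd_orbit_points_def)
  have key: "u \<in> odd_orbit_points \<longleftrightarrow> u - u\<^sub>0 \<in> K" for u
  proof -
    let ?y = "\<alpha> (u - u\<^sub>0) - (u - u\<^sub>0)"
    have y: "(\<beta> u - u) - (\<beta> u\<^sub>0 - u\<^sub>0) = ?y"
      by (simp add: affine alpha_diff algebra_simps)
    show ?thesis
    proof
      assume "u \<in> odd_orbit_points"
      then have "\<beta> u - u \<in> H" by (simp add: odd_orbit_points_def)
      then have "(\<beta> u - u) - (\<beta> u\<^sub>0 - u\<^sub>0) \<in> H" using h0 by (rule H_diff)
      then have yH: "?y \<in> H" by (simp only: y)
      have "?y + ?y = \<alpha> ?y + ?y" using alpha_fixes_H[OF yH] by simp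
      also have "\<dots> = 0" by (simp add: alpha_diff involutive)
      finally have "?y = 0"
        using add_subgroup_odd_card_two_torsion[OF add_subgroup_subgroup_gen assms(1)
            odd_card_H[OF assms(1) h0] yH] by blast
      then show "u - u\<^sub>0 \<in> K" by simp
    next
      assume "u - u\<^sub>0 \<in> K"
      then have "\<beta> u - u = \<beta> u\<^sub>0 - u\<^sub>0" using y by simp
      then show "u \<in> odd_orbit_points" using h0 by (simp add: odd_orbit_points_def)
    qed
  qed
  show ?thesis
  proof (rule set_eqI)
    fix u
    show "u \<in> odd_orbit_points \<longleftrightarrow> u \<in> (+) u\<^sub>0 ` K"
    proof
      assume "u \<in> odd_orbit_points"
      then have "u - u\<^sub>0 \<in> K" using key by blast
      then show "u \<in> (+) u\<^sub>0 ` K" by (rule rev_image_eqI) simp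
    next
      assume "u \<in> (+) u\<^sub>0 ` K"
      then obtain k where "k \<in> K" "u = u\<^sub>0 + k" by blast
      then show "u \<in> odd_orbit_points" using key[of u] by simp
    qed
  qed
qed

lemma count_orbits_if_odd_orbit_condition:
  assumes "finite H" odd_orbit_condition
  shows "(finite odd_orbits \<longleftrightarrow> finite K) \<and> card K = card H * card odd_orbits"
    and "(finite even_orbits \<longleftrightarrow> finite (UNIV - K)) \<and>
      card (UNIV - K) = 2 * card H * card even_orbits"
proof -
  obtain u\<^sub>0 where "u\<^sub>0 \<in> odd_orbit_points"
    using odd_orbit_point_if_odd_orbit_condition[OF assms(2)] .
  then have "odd_orbit_points = (+) u\<^sub>0 ` K" "UNIV - odd_orbit_points = (+) u\<^sub>0 ` (UNIV - K)"
    using odd_orbit_points_eq_translate[OF assms(1)] by (simp_all add: translation_diff)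
  then show "(finite odd_orbits \<longleftrightarrow> finite K) \<and> card K = card H * card odd_orbits"
    and "(finite even_orbits \<longleftrightarrow> finite (UNIV - K)) \<and>
      card (UNIV - K) = 2 * card H * card even_orbits"
    using count_odd_orbits[OF assms(1)] count_even_orbits[OF assms(1)]
    by (simp_all add: finite_image_iff card_image)
qed

lemma count_orbits_unless_odd_orbit_condition:
  assumes "finite H" "\<not> odd_orbit_condition"
  shows "odd_orbits = {}"
    and "(finite even_orbits \<longleftrightarrow> finite (UNIV :: 'a set)) \<and>
      card (UNIV :: 'a set) = 2 * card H * card even_orbits"
proof -
  have "odd_orbit_points = {}"
    using odd_orbit_condition_if_odd_orbit_point[OF assms(1)] assms(2) by blast
  then show "odd_orbits = {}"
    and "(finite even_orbits \<longleftrightarrow> finite (UNIV :: 'a set)) \<and>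
      card (UNIV :: 'a set) = 2 * card H * card even_orbits"
    using odd_orbits_eq[OF assms(1)] count_even_orbits[OF assms(1)] by simp_all
qed

end

theorem theorem3p1:
  fixes \<alpha> :: "'a::ab_group_add \<Rightarrow> 'a" and w :: 'a and \<beta> :: "'a \<Rightarrow> 'a"
  assumes aut: "group_aut \<alpha>"
    and invol: "\<alpha> \<circ> \<alpha> = id"
    and beta_def: "\<beta> = (\<lambda>u. \<alpha> u + w)"
  defines "H \<equiv> subgroup_gen {\<alpha> w + w}"
    and "K \<equiv> {x. \<alpha> x - x = 0}"
    and "oddO \<equiv> {Y \<in> orbits \<beta>. finite Y \<and> odd (card Y)}"
    and "evenO \<equiv> {Y \<in> orbits \<beta>. finite Y \<and> even (card Y)}"
  shows
    "(infinite H \<longrightarrow> (\<forall>u. infinite (orbit_of \<beta> u))) \<and>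
     (finite H \<longrightarrow>
       (let q0 = card H;
            star = (odd q0 \<and> nat_mult q0 w \<in> range (\<lambda>x. \<alpha> x - x))
        in (\<forall>u. finite (orbit_of \<beta> u) \<and>
                ((card (orbit_of \<beta> u) = q0 \<and> odd q0) \<or> card (orbit_of \<beta> u) = 2 * q0))
         \<and> (oddO \<noteq> {} \<longleftrightarrow> star)
         \<and> ((odd q0 \<and> range (\<lambda>x. \<alpha> x - x) = {x. \<alpha> x + x = 0}) \<longrightarrow> star)
         \<and> (star \<longrightarrow>
              (finite oddO \<longleftrightarrow> finite K) \<and>
              (finite K \<longrightarrow> real (card oddO) = real (card K) / real q0) \<and>
              (finite evenO \<longleftrightarrow> finite (UNIV - K)) \<and>
              (finite (UNIV - K) \<longrightarrow>
                 real (card evenO) = real (card (UNIV - K)) / real (2 * q0)))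
         \<and> (\<not> star \<longrightarrow>
              oddO = {} \<and>
              (finite evenO \<longleftrightarrow> finite (UNIV :: 'a set)) \<and>
              (finite (UNIV :: 'a set) \<longrightarrow>
                 real (card evenO) = real (card (UNIV :: 'a set)) / real (2 * q0)))))"
proof -
  interpret aff: affine_involution \<alpha> w \<beta>
    using aut comp_eq_id_dest[of \<alpha> \<alpha> id] invol beta_def
    by unfold_locales (simp_all add: group_aut_def)
  have ratio: "real m = real k / real n" if "k = n * m" "0 < n" for k n m :: nat
    using that by simp
  show ?thesis
    unfolding Let_def H_def K_def oddO_def evenO_def
    using aff.infinite_orbit aff.card_orbit_cases aff.odd_orbits_nonempty_iff
      aff.odd_orbit_condition_if_range_eq_kernel aff.count_orbits_if_odd_orbit_condition
      aff.count_orbits_unless_odd_orbit_condition aff.card_H_pos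
    by (auto intro: ratio)
qed

end
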